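(* Let $d\geq 1$, $n\geq 1$, let $X^{(n)}=\{X_1,\dots,X_n\}\subset\mathbb{R}^d$ be a target sample and let $u^{(n)}=\{u_1,\dots,u_n\}\subset\mathbb{R}^d$ be a reference sample in general position (no more than $d$ of the points lie in any $(d-1)$-dimensional affine subspace). Let $\hat T$ be a solution of the discrete optimal transport problem from $u^{(n)}$ to $X^{(n)}$. Then for every $i\in\{1,\dots,n\}$, $$\mathrm{BP}(\hat T(u_i))\in\left[\mathrm{TD}(u_i;u^{(n)})-\frac{d-1}{n},\ \mathrm{TD}(u_i;u^{(n)})\right].$$
   Context: For finite sets $u^{(n)}=\{u_1,\dots,u_n\}$ and $Z^{(n)}=\{Z_1,\dots,Z_n\}$ in $\mathbb{R}^d$, let $\Gamma(u^{(n)},Z^{(n)})$ be the set of bijections $T:u^{(n)}\to Z^{(n)}$; an empirical optimal transport map $\hat T_{Z^{(n)}}$ is any minimizer of $T\mapsto\frac1n\sum_{i=1}^n\|T(u_i)-u_i\|^2$ over $\Gamma(u^{(n)},Z^{(n)})$, and $\hat T=\hat T_{X^{(n)}}$. For $\ell\in\{1,\dots,n\}$, $\mathcal{Q}_{\ell,n}$ is the set of all sets $Z^{(n)}=\{Z_1,\dots,Z_n\}\subset\mathbb{R}^d$ sharing exactly $n-\ell$ elements with $X^{(n)}$. The finite sample breakdown point is $$\mathrm{BP}(\hat T(u_i))=\frac1n\min\Big\{\ell\in\{1,\dots,n\}:\ \sup_{Z^{(n)}\in\mathcal{Q}_{\ell,n}}\|\hat T(u_i)-\hat T_{Z^{(n)}}(u_i)\|=\infty\Big\}.$$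 The Tukey depth of $x\in\mathbb{R}^d$ w.r.t. $u^{(n)}$ is $\mathrm{TD}(x;u^{(n)})=\min_{v\in\mathcal{S}^{d-1}}\frac1n\sum_{j=1}^n\mathbf{1}(\langle v,u_j-x\rangle\geq 0)$, where $\mathcal{S}^{d-1}$ is the unit sphere. *)

theory Defs
  imports "HOL-Analysis.Analysis"
begin

definition emp_cost :: "'a::euclidean_space set \<Rightarrow> ('a \<Rightarrow> 'a) \<Rightarrow> real" where
  "emp_cost U T = (\<Sum>u\<in>U. (norm (T u - u))\<^sup>2) / real (card U)"

definition is_emp_OT :: "'a::euclidean_space set \<Rightarrow> 'a set \<Rightarrow> ('a \<Rightarrow> 'a) \<Rightarrow> bool" where
  "is_emp_OT U Z T \<longleftrightarrow> bij_betw T U Z \<and>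
     (\<forall>T'. bij_betw T' U Z \<longrightarrow> emp_cost U T \<le> emp_cost U T')"

definition corrupted :: "nat \<Rightarrow> 'a set \<Rightarrow> 'a set set" where
  "corrupted l X = {Z. finite Z \<and> card Z = card X \<and> card (Z \<inter> X) = card X - l}"

text \<open>Finite sample breakdown point of the value at x of the selected empirical OT map;
  sel Z is the chosen empirical OT map onto Z, and the estimator is sel X.\<close>
definition breakdown_point :: "('a set \<Rightarrow> 'a \<Rightarrow> 'a::real_normed_vector) \<Rightarrow> 'a set \<Rightarrow> 'a \<Rightarrow> real" where
  "breakdown_point sel X x =
     real (LEAST l. 1 \<le> l \<and> l \<le> card X \<and>
        \<not> bdd_above ((\<lambda>Z. norm (sel X x - sel Z x)) ` corrupted l X)) / real (card X)"

definition tukey_depth :: "'a::euclidean_space \<Rightarrow> 'a set \<Rightarrow> real" where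
  "tukey_depth x U = Inf ((\<lambda>v. real (card {u\<in>U. inner v (u - x) \<ge> 0}) / real (card U))
                          ` sphere 0 1)"

definition general_position :: "'a::euclidean_space set \<Rightarrow> bool" where
  "general_position U \<longleftrightarrow>
     (\<forall>A. affine A \<and> aff_dim A = int DIM('a) - 1 \<longrightarrow> card (U \<inter> A) \<le> DIM('a))"

end

theory Submission
  imports Defs
begin

text \<open>
  An empirical optimal transport map is monotone: exchanging the targets of two sample points
  cannot lower the cost, so \<open>(T u - T w) \<bullet> (u - w) \<ge> 0\<close>. Let the Tukey depth of \<open>x\<close> be
  attained by a halfspace \<open>H = {u. v \<bullet> (u - x) \<ge> 0}\<close> containing \<open>k\<close> sample points.

  Replacing \<open>k\<close> target points by points far out on the ray through \<open>v\<close> breaks the estimate: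
  if \<open>T x\<close> stayed among the uncorrupted points, one of the far points would be the image of
  a sample point outside \<open>H\<close>, which monotonicity against \<open>x\<close> forbids.

  Conversely, if \<open>T x\<close> is very far out in a direction \<open>v\<close>, monotonicity forces every sample
  point with \<open>v \<bullet> (u - x) > \<epsilon>\<close> onto a corrupted target. General position leaves at most
  \<open>d\<close> sample points in the slab \<open>\<bar>v \<bullet> (u - x)\<bar> \<le> \<epsilon>\<close> (for a uniform \<open>\<epsilon> > 0\<close>, by
  compactness of the sphere), so this needs at least \<open>k - d + 1\<close> corrupted points.
\<close>

lemma bij_betw_card_preimage:
  assumes "bij_betw f A B" and "C \<subseteq> B"
  shows "card {a\<in>A. f a \<in> C} = card C"
proof -
  have "f ` {a\<in>A. f a \<in> C} = C"
    using assms unfolding bij_betw_def by auto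
  then have "bij_betw f {a\<in>A. f a \<in> C} C"
    by (rule bij_betw_subset[OF assms(1), rotated]) auto
  then show ?thesis
    by (rule bij_betw_same_card)
qed

lemma eventually_mult_dominates_at_top:
  fixes f g :: "'b \<Rightarrow> real"
  assumes "finite A" and "\<forall>a\<in>A. 0 < f a"
  shows "\<forall>\<^sub>F t in at_top. \<forall>a\<in>A. g a < t * f a"
proof (intro eventually_ball_finite[OF \<open>finite A\<close>] ballI)
  fix a
  assume "a \<in> A"
  show "\<forall>\<^sub>F t in at_top. g a < t * f a"
    using eventually_gt_at_top[of "g a / f a"]
    by (rule eventually_mono) (use assms(2) \<open>a \<in> A\<close> in \<open>simp add: pos_divide_less_eq\<close>)
qed

lemma sphere_inner_uniformly_nonzero:
  fixes W :: "'a::euclidean_space set"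
  assumes "finite W" and "\<forall>v\<in>sphere 0 1. \<exists>w\<in>W. inner v w \<noteq> 0"
  obtains e where "e > 0" and "\<forall>v\<in>sphere 0 1. \<exists>w\<in>W. e < \<bar>inner v w\<bar>"
proof -
  define g where "g v = (\<Sum>w\<in>W. \<bar>inner v w\<bar>)" for v :: 'a
  have "continuous_on (sphere 0 1) g"
    unfolding g_def by (intro continuous_intros)
  moreover have "sphere (0::'a) 1 \<noteq> {}"
    by simp
  ultimately obtain v0 where v0: "v0 \<in> sphere 0 1" and v0_min: "\<And>v. v \<in> sphere 0 1 \<Longrightarrow> g v0 \<le> g v"
    using continuous_attains_inf[OF compact_sphere] by blast
  have "g v0 > 0"
    using assms v0 unfolding g_def by (force intro: sum_pos2)
  show thesis
  proof
    show "g v0 / (card W + 1) > 0"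
      using \<open>g v0 > 0\<close> by simp
    show "\<forall>v\<in>sphere 0 1. \<exists>w\<in>W. g v0 / (card W + 1) < \<bar>inner v w\<bar>"
    proof (rule ballI, rule ccontr)
      fix v :: 'a
      assume "v \<in> sphere 0 1" and "\<not> (\<exists>w\<in>W. g v0 / (card W + 1) < \<bar>inner v w\<bar>)"
      then have "g v \<le> card W * (g v0 / (card W + 1))"
        unfolding g_def by (metis linorder_not_less sum_bounded_above)
      also have "\<dots> < g v0"
        using \<open>g v0 > 0\<close> by (simp add: field_simps)
      finally show False
        using v0_min[OF \<open>v \<in> sphere 0 1\<close>] by simp
    qed
  qed
qed

lemma card_halfspace_le_open_halfspace_plus_slab:
  assumes "finite U"
  shows "card {u\<in>U. inner v (u - x) \<ge> 0}
    \<le> card {u\<in>U. \<epsilon> < inner v (u - x)} + card {u\<in>U. \<bar>inner v (u - x)\<bar> \<le> \<epsilon>}"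
proof -
  have "card {u\<in>U. inner v (u - x) \<ge> 0}
      \<le> card ({u\<in>U. \<epsilon> < inner v (u - x)} \<union> {u\<in>U. \<bar>inner v (u - x)\<bar> \<le> \<epsilon>})"
    using assms by (intro card_mono) auto
  then show ?thesis
    using card_Un_le le_trans by blast
qed

lemma general_position_off_hyperplane:
  fixes U :: "'a::euclidean_space set"
  assumes "general_position U" and "finite U" and "S \<subseteq> U" and "DIM('a) < card S" and "v \<noteq> 0"
  shows "\<exists>u\<in>S. inner v (u - x) \<noteq> 0"
proof (rule ccontr)
  assume "\<not> ?thesis"
  then have "S \<subseteq> U \<inter> {y. inner v y = inner v x}"
    using assms(3) by (auto simp: inner_diff_right)
  then have "card S \<le> card (U \<inter> {y. inner v y = inner v x})"
    using assms(2) by (simp add: card_mono)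
  moreover have "card (U \<inter> {y. inner v y = inner v x}) \<le> DIM('a)"
    using assms(1,5) unfolding general_position_def by (simp add: affine_hyperplane)
  ultimately show False
    using assms(4) by simp
qed

lemma general_position_thin_slab:
  fixes U :: "'a::euclidean_space set"
  assumes "general_position U" and "finite U"
  obtains \<epsilon> where "\<epsilon> > 0" and "\<forall>v\<in>sphere 0 1. card {u\<in>U. \<bar>inner v (u - x)\<bar> \<le> \<epsilon>} \<le> DIM('a)"
proof -
  define F where "F = {S. S \<subseteq> U \<and> DIM('a) < card S}"
  have "\<forall>\<^sub>F \<epsilon> in at_right 0. \<forall>v\<in>sphere 0 1. \<exists>u\<in>S. \<epsilon> < \<bar>inner v (u - x)\<bar>" if "S \<in> F" for S
  proof -
    have "S \<subseteq> U" and "DIM('a) < card S"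
      using that unfolding F_def by auto
    have "\<forall>v\<in>sphere 0 1. \<exists>w\<in>(\<lambda>u. u - x) ` S. inner v w \<noteq> 0"
    proof
      fix v :: 'a
      assume "v \<in> sphere 0 1"
      then have "v \<noteq> 0"
        by auto
      then show "\<exists>w\<in>(\<lambda>u. u - x) ` S. inner v w \<noteq> 0"
        using general_position_off_hyperplane[OF assms \<open>S \<subseteq> U\<close> \<open>DIM('a) < card S\<close>] by blast
    qed
    moreover have "finite S"
      using \<open>S \<subseteq> U\<close> assms(2) by (rule finite_subset)
    ultimately obtain e where "e > 0" and "\<forall>v\<in>sphere 0 1. \<exists>u\<in>S. e < \<bar>inner v (u - x)\<bar>"
      using sphere_inner_uniformly_nonzero[of "(\<lambda>u. u - x) ` S"] by auto
    then show ?thesis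
      unfolding eventually_at_right_field by (meson less_trans)
  qed
  moreover have "finite F"
    using assms(2) unfolding F_def by simp
  ultimately have "\<forall>\<^sub>F \<epsilon> in at_right 0. \<epsilon> > 0 \<and> (\<forall>S\<in>F. \<forall>v\<in>sphere 0 1. \<exists>u\<in>S. \<epsilon> < \<bar>inner v (u - x)\<bar>)"
    by (intro eventually_conj eventually_at_right_less eventually_ball_finite) auto
  then obtain \<epsilon> :: real where "\<epsilon> > 0" and \<epsilon>: "\<forall>S\<in>F. \<forall>v\<in>sphere 0 1. \<exists>u\<in>S. \<epsilon> < \<bar>inner v (u - x)\<bar>"
    using eventually_happens' trivial_limit_at_right_real by blast
  show thesis
  proof (rule that[OF \<open>\<epsilon> > 0\<close>], intro ballI leI notI)
    fix v :: 'a
    assume "v \<in> sphere 0 1" and "DIM('a) < card {u\<in>U. \<bar>inner v (u - x)\<bar> \<le> \<epsilon>}"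
    then have "{u\<in>U. \<bar>inner v (u - x)\<bar> \<le> \<epsilon>} \<in> F"
      unfolding F_def by auto
    then show False
      using \<epsilon> \<open>v \<in> sphere 0 1\<close> by force
  qed
qed

lemma tukey_depth_attained:
  fixes U :: "'a::euclidean_space set"
  assumes "finite U"
  obtains v where "v \<in> sphere 0 1"
    and "\<forall>w\<in>sphere 0 1. card {u\<in>U. inner v (u - x) \<ge> 0} \<le> card {u\<in>U. inner w (u - x) \<ge> 0}"
    and "tukey_depth x U = card {u\<in>U. inner v (u - x) \<ge> 0} / card U"
proof -
  define count where "count w = card {u\<in>U. inner w (u - x) \<ge> 0}" for w :: 'a
  have "count ` sphere 0 1 \<subseteq> {..card U}"
    unfolding count_def using assms by (auto intro: card_mono)
  then have "finite (count ` sphere 0 1)"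
    using finite_subset by blast
  moreover have "count ` sphere 0 1 \<noteq> {}"
    by simp
  ultimately obtain v where v: "v \<in> sphere 0 1" and "count v = Min (count ` sphere 0 1)"
    using Min_in by (metis imageE)
  then have v_min: "\<forall>w\<in>sphere 0 1. count v \<le> count w"
    using \<open>finite (count ` sphere 0 1)\<close> by simp
  have "tukey_depth x U = count v / card U"
    unfolding tukey_depth_def count_def[symmetric]
    using v v_min by (intro cInf_eq_minimum) (auto intro: divide_right_mono)
  with v v_min show thesis
    using that unfolding count_def by blast
qed

definition ray_points :: "real \<Rightarrow> 'a::real_normed_vector \<Rightarrow> nat \<Rightarrow> 'a set" where
  "ray_points t v k = (\<lambda>j. (t + real j) *\<^sub>R v) ` {..<k}"

lemma finite_ray_points: "finite (ray_points t v k)"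
  unfolding ray_points_def by simp

lemma card_ray_points:
  assumes "v \<noteq> 0"
  shows "card (ray_points t v k) = k"
proof -
  have "inj_on (\<lambda>j. (t + real j) *\<^sub>R v) {..<k}"
    using assms by (intro inj_onI) simp
  then show ?thesis
    unfolding ray_points_def by (simp add: card_image)
qed

lemma ray_points_beyond:
  assumes "z \<in> ray_points t v k"
  shows "\<exists>c\<ge>t. z = c *\<^sub>R v"
proof -
  obtain j where "z = (t + real j) *\<^sub>R v"
    using assms unfolding ray_points_def by blast
  then show ?thesis
    by (intro exI[of _ "t + real j"]) simp
qed

lemma norm_ray_points:
  assumes "norm v = 1" and "0 \<le> t" and "z \<in> ray_points t v k"
  shows "t \<le> norm z"
  using assms unfolding ray_points_def by auto

lemma ray_points_corrupted:
  assumes "X' \<subseteq> X" and "finite X'" and "card X' = card X - k" and "k \<le> card X"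
    and "norm v = 1" and "0 \<le> t" and "\<forall>y\<in>X. norm y < t"
  shows "X' \<union> ray_points t v k \<in> corrupted k X"
proof -
  have "ray_points t v k \<inter> X = {}"
    using norm_ray_points[OF \<open>norm v = 1\<close> \<open>0 \<le> t\<close>] assms(7) by fastforce
  then have "(X' \<union> ray_points t v k) \<inter> X = X'"
    using \<open>X' \<subseteq> X\<close> by auto
  moreover have "card (ray_points t v k) = k"
    using \<open>norm v = 1\<close> by (intro card_ray_points) auto
  then have "card (X' \<union> ray_points t v k) = card X"
    using \<open>ray_points t v k \<inter> X = {}\<close> assms(1-4)
    by (subst card_Un_disjoint) (auto simp: finite_ray_points)
  ultimately show ?thesis
    unfolding corrupted_def using assms(2,3) by (simp add: finite_ray_points)
qed

lemma emp_OT_monotone: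
  assumes "is_emp_OT U Z T" and "finite U" and "u \<in> U" and "w \<in> U"
  shows "inner (T u - T w) (u - w) \<ge> 0"
proof (cases "u = w")
  case False
  define s where "s = Fun.swap u w id"
  have "bij_betw s U U"
    unfolding s_def using assms(3,4) by (simp add: bij_betw_swap_iff)
  moreover have "bij_betw T U Z" and optimal: "\<And>T'. bij_betw T' U Z \<Longrightarrow> emp_cost U T \<le> emp_cost U T'"
    using assms(1) unfolding is_emp_OT_def by auto
  ultimately have "emp_cost U T \<le> emp_cost U (T \<circ> s)"
    using bij_betw_trans optimal by blast
  moreover have "card U > 0"
    using assms(2,3) card_gt_0_iff by blast
  ultimately have "(\<Sum>y\<in>U. (norm (T y - y))\<^sup>2) \<le> (\<Sum>y\<in>U. (norm (T (s y) - y))\<^sup>2)"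
    unfolding emp_cost_def by (simp add: divide_le_cancel)
  moreover have "(\<Sum>y\<in>U. f y) = f u + f w + (\<Sum>y\<in>U - {u} - {w}. f y)" for f :: "'a \<Rightarrow> real"
    using assms(2-4) False by (simp add: sum.remove)
  moreover have "(\<Sum>y\<in>U - {u} - {w}. (norm (T (s y) - y))\<^sup>2) = (\<Sum>y\<in>U - {u} - {w}. (norm (T y - y))\<^sup>2)"
    by (rule sum.cong) (auto simp: s_def swap_apply)
  ultimately have "(norm (T u - u))\<^sup>2 + (norm (T w - w))\<^sup>2 \<le> (norm (T w - u))\<^sup>2 + (norm (T u - w))\<^sup>2"
    by (simp add: s_def swap_apply)
  then show ?thesis
    by (simp add: power2_norm_eq_inner inner_commute algebra_simps)
qed simp

lemma emp_OT_captures_far_cluster: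
  assumes ot: "is_emp_OT U Z T" and "finite U" and "x \<in> U"
    and "F \<subseteq> Z" and "card {u\<in>U. inner v (u - x) \<ge> 0} \<le> card F"
    and "\<forall>z\<in>Z - F. norm z \<le> R"
    and "\<forall>z\<in>F. \<exists>c\<ge>t. z = c *\<^sub>R v"
    and "\<forall>u\<in>U. inner v (u - x) < 0 \<longrightarrow> R * norm (x - u) < t * inner v (x - u)"
  shows "T x \<in> F"
proof (rule ccontr)
  assume "T x \<notin> F"
  have bij: "bij_betw T U Z"
    using ot unfolding is_emp_OT_def by simp
  define H where "H = {u\<in>U. inner v (u - x) \<ge> 0}"
  define P where "P = {u\<in>U. T u \<in> F}"
  have "card H \<le> card P"
    unfolding H_def P_def using bij_betw_card_preimage[OF bij \<open>F \<subseteq> Z\<close>] assms(5) by simp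
  moreover have "x \<in> H - P"
    unfolding H_def P_def using \<open>x \<in> U\<close> \<open>T x \<notin> F\<close> by simp
  moreover have "finite H"
    unfolding H_def using \<open>finite U\<close> by simp
  ultimately have "\<not> P \<subseteq> H"
    using psubset_card_mono[of H P] by auto
  then obtain u where "u \<in> P" and "u \<notin> H"
    by blast
  then have "u \<in> U" and "T u \<in> F" and "inner v (u - x) < 0"
    unfolding H_def P_def by auto
  from \<open>T u \<in> F\<close> obtain c where "c \<ge> t" and Tu: "T u = c *\<^sub>R v"
    using assms(7) by blast
  have "T x \<in> Z - F"
    using bij \<open>x \<in> U\<close> \<open>T x \<notin> F\<close> by (simp add: bij_betwE)
  have "0 < inner v (x - u)"
    using \<open>inner v (u - x) < 0\<close> by (simp add: inner_diff_right)
  have "t * inner v (x - u) \<le> c * inner v (x - u)"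
    using \<open>c \<ge> t\<close> \<open>0 < inner v (x - u)\<close> by (simp add: mult_right_mono)
  also have "\<dots> = inner (T u) (x - u)"
    by (simp add: Tu)
  also have "\<dots> \<le> inner (T x) (x - u)"
    using emp_OT_monotone[OF ot \<open>finite U\<close> \<open>x \<in> U\<close> \<open>u \<in> U\<close>] by (simp add: inner_diff_left)
  also have "\<dots> \<le> norm (T x) * norm (x - u)"
    by (rule norm_cauchy_schwarz)
  also have "\<dots> \<le> R * norm (x - u)"
    using assms(6) \<open>T x \<in> Z - F\<close> by (simp add: mult_right_mono)
  finally show False
    using assms(8) \<open>u \<in> U\<close> \<open>inner v (u - x) < 0\<close> by (meson not_le)
qed

lemma emp_OT_preimage_outside_sample:
  assumes "is_emp_OT U Z T" and "finite U" and "x \<in> U" and "u \<in> U"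
    and "\<forall>y\<in>X. inner y (u - x) \<le> C" and "C < inner (T x) (u - x)"
  shows "T u \<notin> X"
proof
  assume "T u \<in> X"
  have "inner (T x) (u - x) \<le> inner (T u) (u - x)"
    using emp_OT_monotone[OF assms(1-4)] by (simp add: inner_diff_left inner_diff_right)
  then show False
    using assms(5,6) \<open>T u \<in> X\<close> by fastforce
qed

lemma emp_OT_value_uncorrupted_or_bounded:
  fixes U :: "'a::euclidean_space set"
  assumes ot: "is_emp_OT U Z T" and "finite U" and "x \<in> U" and "\<epsilon> > 0"
    and slab: "\<forall>v\<in>sphere 0 1. card {u\<in>U. \<bar>inner v (u - x)\<bar> \<le> \<epsilon>} \<le> m"
    and depth: "\<forall>v\<in>sphere 0 1. k \<le> card {u\<in>U. inner v (u - x) \<ge> 0}"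
    and few: "card (Z - X) + m \<le> k"
    and C: "\<forall>y\<in>X. \<forall>u\<in>U. inner y (u - x) \<le> C" and "0 \<le> C"
  shows "T x \<in> X \<or> \<epsilon> * norm (T x) \<le> C"
proof (rule ccontr)
  assume "\<not> ?thesis"
  then have "T x \<notin> X" and big: "C < \<epsilon> * norm (T x)"
    by auto
  then have "T x \<noteq> 0"
    using \<open>0 \<le> C\<close> by auto
  define v where "v = T x /\<^sub>R norm (T x)"
  have "v \<in> sphere 0 1"
    using \<open>T x \<noteq> 0\<close> by (simp add: v_def)
  have bij: "bij_betw T U Z"
    using ot unfolding is_emp_OT_def by simp
  define Q where "Q = {u\<in>U. T u \<in> Z - X}"
  define P where "P = {u\<in>U. \<epsilon> < inner v (u - x)}"
  have "P \<subseteq> Q - {x}"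
  proof
    fix u
    assume "u \<in> P"
    then have "u \<in> U" and far: "\<epsilon> < inner v (u - x)"
      unfolding P_def by auto
    note big
    also have "\<epsilon> * norm (T x) < inner v (u - x) * norm (T x)"
      using far \<open>T x \<noteq> 0\<close> by simp
    also have "\<dots> = inner (T x) (u - x)"
      using \<open>T x \<noteq> 0\<close> by (simp add: v_def)
    finally have "T u \<notin> X"
      using emp_OT_preimage_outside_sample[OF ot \<open>finite U\<close> \<open>x \<in> U\<close> \<open>u \<in> U\<close>] C \<open>u \<in> U\<close> by blast
    moreover have "u \<noteq> x"
      using far \<open>\<epsilon> > 0\<close> by auto
    ultimately show "u \<in> Q - {x}"
      unfolding Q_def using bij \<open>u \<in> U\<close> by (auto dest: bij_betwE)
  qed
  moreover have "x \<in> Q" and "finite Q"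
    unfolding Q_def using bij \<open>x \<in> U\<close> \<open>T x \<notin> X\<close> \<open>finite U\<close> by (auto dest: bij_betwE)
  ultimately have "card P < card Q"
    by (meson card_Diff1_less card_mono finite_Diff le_less_trans)
  also have "card Q = card (Z - X)"
    unfolding Q_def by (rule bij_betw_card_preimage[OF bij]) auto
  finally have "card P < card (Z - X)" .
  have "k \<le> card {u\<in>U. inner v (u - x) \<ge> 0}"
    using depth \<open>v \<in> sphere 0 1\<close> by blast
  also have "\<dots> \<le> card P + m"
    unfolding P_def using card_halfspace_le_open_halfspace_plus_slab[OF \<open>finite U\<close>, of v x \<epsilon>]
      slab \<open>v \<in> sphere 0 1\<close> by fastforce
  finally show False
    using \<open>card P < card (Z - X)\<close> few by linarith
qed

lemma corruption_unbounded_at_halfspace_count: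
  fixes U X :: "'a::euclidean_space set"
  assumes "finite U" and "finite X" and "card U = card X"
    and sel: "\<forall>Z. finite Z \<and> card Z = card X \<longrightarrow> is_emp_OT U Z (sel Z)"
    and "x \<in> U" and "v \<in> sphere 0 1"
  shows "\<not> bdd_above ((\<lambda>Z. norm (sel X x - sel Z x)) ` corrupted (card {u\<in>U. inner v (u - x) \<ge> 0}) X)"
proof -
  define k where "k = card {u\<in>U. inner v (u - x) \<ge> 0}"
  have "k \<le> card U"
    unfolding k_def using \<open>finite U\<close> by (intro card_mono) auto
  then have "k \<le> card X"
    using \<open>card U = card X\<close> by simp
  obtain X' where "X' \<subseteq> X" and "card X' = card X - k" and "finite X'"
    using obtain_subset_with_card_n[of "card X - k" X] by auto
  obtain R where R: "\<forall>y\<in>X. norm y \<le> R"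
    using finite_imp_bounded[OF \<open>finite X\<close>] unfolding bounded_iff by blast
  have "norm v = 1" and "v \<noteq> 0"
    using \<open>v \<in> sphere 0 1\<close> by auto
  have "\<forall>\<^sub>F t in at_top. \<forall>u\<in>{u\<in>U. inner v (u - x) < 0}. R * norm (x - u) < t * inner v (x - u)"
    using \<open>finite U\<close> by (intro eventually_mult_dominates_at_top) (auto simp: inner_diff_right)
  then have far: "\<forall>\<^sub>F t in at_top. \<forall>u\<in>U. inner v (u - x) < 0 \<longrightarrow> R * norm (x - u) < t * inner v (x - u)"
    by (rule eventually_mono) auto
  have "\<exists>Z\<in>corrupted k X. M < norm (sel X x - sel Z x)" for M
  proof -
    have "\<forall>\<^sub>F t in at_top. R < t \<and> 0 < t \<and> M + norm (sel X x) < t \<and>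
        (\<forall>u\<in>U. inner v (u - x) < 0 \<longrightarrow> R * norm (x - u) < t * inner v (x - u))"
      by (intro eventually_conj eventually_gt_at_top far)
    then obtain t where "R < t" and "0 < t" and "M + norm (sel X x) < t"
      and t: "\<forall>u\<in>U. inner v (u - x) < 0 \<longrightarrow> R * norm (x - u) < t * inner v (x - u)"
      using eventually_happens'[OF trivial_limit_at_top_linorder] by blast
    define Z where "Z = X' \<union> ray_points t v k"
    have "Z \<in> corrupted k X"
      unfolding Z_def using R \<open>R < t\<close> \<open>0 < t\<close> \<open>norm v = 1\<close> \<open>X' \<subseteq> X\<close> \<open>finite X'\<close>
        \<open>card X' = card X - k\<close> \<open>k \<le> card X\<close>
      by (intro ray_points_corrupted) fastforce+
    then have "is_emp_OT U Z (sel Z)"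
      using sel unfolding corrupted_def by blast
    then have "sel Z x \<in> ray_points t v k"
      using \<open>finite U\<close> \<open>x \<in> U\<close> t R \<open>X' \<subseteq> X\<close> card_ray_points[OF \<open>v \<noteq> 0\<close>]
      by (intro emp_OT_captures_far_cluster[where T = "sel Z" and R = R])
        (auto simp: Z_def k_def card_ray_points ray_points_beyond)
    then have "t \<le> norm (sel Z x)"
      using \<open>norm v = 1\<close> \<open>0 < t\<close> by (intro norm_ray_points) auto
    then have "M < norm (sel X x - sel Z x)"
      using \<open>M + norm (sel X x) < t\<close> norm_triangle_ineq3[of "sel Z x" "sel X x"]
      by (simp add: norm_minus_commute)
    then show ?thesis
      using \<open>Z \<in> corrupted k X\<close> by blast
  qed
  then show ?thesis
    unfolding k_def[symmetric] bdd_above_def by (meson image_eqI not_le)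
qed

lemma corruption_bounded_below_depth:
  fixes U X :: "'a::euclidean_space set"
  assumes "finite U" and "finite X"
    and sel: "\<forall>Z. finite Z \<and> card Z = card X \<longrightarrow> is_emp_OT U Z (sel Z)"
    and "x \<in> U" and "\<epsilon> > 0"
    and slab: "\<forall>v\<in>sphere 0 1. card {u\<in>U. \<bar>inner v (u - x)\<bar> \<le> \<epsilon>} \<le> m"
    and depth: "\<forall>v\<in>sphere 0 1. k \<le> card {u\<in>U. inner v (u - x) \<ge> 0}"
    and "l + m \<le> k"
  shows "bdd_above ((\<lambda>Z. norm (sel X x - sel Z x)) ` corrupted l X)"
proof -
  define C where "C = Max (insert 0 ((\<lambda>(y, u). inner y (u - x)) ` (X \<times> U)))"
  have fin: "finite (insert 0 ((\<lambda>(y, u). inner y (u - x)) ` (X \<times> U)))"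
    using assms(1,2) by simp
  then have "0 \<le> C"
    unfolding C_def by (rule Max_ge) simp
  have C: "\<forall>y\<in>X. \<forall>u\<in>U. inner y (u - x) \<le> C"
    unfolding C_def using fin by (auto intro!: Max_ge)
  obtain R where R: "\<forall>y\<in>X. norm y \<le> R"
    using finite_imp_bounded[OF \<open>finite X\<close>] unfolding bounded_iff by blast
  have "norm (sel Z x) \<le> max R (C / \<epsilon>)" if "Z \<in> corrupted l X" for Z
  proof -
    have "finite Z" and "card Z = card X" and "card (Z \<inter> X) = card X - l"
      using that unfolding corrupted_def by auto
    then have "card (Z - X) + m \<le> k"
      using \<open>l + m \<le> k\<close> by (simp add: card_Diff_subset_Int)
    then have "sel Z x \<in> X \<or> \<epsilon> * norm (sel Z x) \<le> C"
      using emp_OT_value_uncorrupted_or_bounded[OF _ \<open>finite U\<close> \<open>x \<in> U\<close> \<open>\<epsilon> > 0\<close> slab depth _ C \<open>0 \<le> C\<close>]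
        sel \<open>finite Z\<close> \<open>card Z = card X\<close> by blast
    then show ?thesis
      using R \<open>\<epsilon> > 0\<close> by (auto simp: le_max_iff_disj pos_le_divide_eq mult.commute)
  qed
  then show ?thesis
    unfolding bdd_above_def
    by (intro exI[of _ "norm (sel X x) + max R (C / \<epsilon>)"]) (force intro: order_trans[OF norm_triangle_ineq4])
qed

lemma breakdown_point_between:
  assumes "1 \<le> k" and "k \<le> card X"
    and "\<not> bdd_above ((\<lambda>Z. norm (sel X x - sel Z x)) ` corrupted k X)"
    and "\<forall>l. l + m \<le> k \<longrightarrow> bdd_above ((\<lambda>Z. norm (sel X x - sel Z x)) ` corrupted l X)"
  shows "breakdown_point sel X x \<in> {(real k - (real m - 1)) / card X .. real k / card X}"
proof -
  define L where "L = (LEAST l. 1 \<le> l \<and> l \<le> card X \<and>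
      \<not> bdd_above ((\<lambda>Z. norm (sel X x - sel Z x)) ` corrupted l X))"
  have "L \<le> k"
    unfolding L_def by (rule Least_le) (use assms in blast)
  moreover have "\<not> bdd_above ((\<lambda>Z. norm (sel X x - sel Z x)) ` corrupted L X)"
    unfolding L_def by (rule LeastI2[of _ k]) (use assms in auto)
  then have "k < L + m"
    using assms(4) by (meson not_le)
  ultimately have "real k - (real m - 1) \<le> real L" and "real L \<le> real k"
    by linarith+
  moreover have "breakdown_point sel X x = real L / card X"
    unfolding breakdown_point_def L_def ..
  ultimately show ?thesis
    using assms(1,2) by (auto intro: divide_right_mono)
qed

theorem mainTheorem1:
  fixes U X :: "'a::euclidean_space set"
    and sel :: "'a set \<Rightarrow> 'a \<Rightarrow> 'a"
    and n :: nat and x :: 'a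
  assumes "finite U" and "finite X"
    and "card U = n" and "card X = n" and "n \<ge> 1"
    and "general_position U"
    and "\<forall>Z. finite Z \<and> card Z = n \<longrightarrow> is_emp_OT U Z (sel Z)"
    and "x \<in> U"
  shows "breakdown_point sel X x \<in>
           {tukey_depth x U - (real DIM('a) - 1) / real n .. tukey_depth x U}"
proof -
  have sel: "\<forall>Z. finite Z \<and> card Z = card X \<longrightarrow> is_emp_OT U Z (sel Z)"
    using assms(4,7) by simp
  obtain v where "v \<in> sphere 0 1"
    and depth: "\<forall>w\<in>sphere 0 1. card {u\<in>U. inner v (u - x) \<ge> 0} \<le> card {u\<in>U. inner w (u - x) \<ge> 0}"
    and tukey: "tukey_depth x U = card {u\<in>U. inner v (u - x) \<ge> 0} / card U"
    using tukey_depth_attained[OF \<open>finite U\<close>] by blast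
  define k where "k = card {u\<in>U. inner v (u - x) \<ge> 0}"
  have "1 \<le> k"
    unfolding k_def using \<open>finite U\<close> \<open>x \<in> U\<close> by (auto simp: Suc_le_eq card_gt_0_iff)
  have "k \<le> card U"
    unfolding k_def using \<open>finite U\<close> by (intro card_mono) auto
  then have "k \<le> card X"
    using assms(3,4) by simp
  obtain \<epsilon> where "\<epsilon> > 0" and slab: "\<forall>w\<in>sphere 0 1. card {u\<in>U. \<bar>inner w (u - x)\<bar> \<le> \<epsilon>} \<le> DIM('a)"
    using general_position_thin_slab[OF \<open>general_position U\<close> \<open>finite U\<close>] by blast
  have "\<not> bdd_above ((\<lambda>Z. norm (sel X x - sel Z x)) ` corrupted k X)"
    unfolding k_def using corruption_unbounded_at_halfspace_count[OF assms(1,2) _ sel \<open>x \<in> U\<close> \<open>v \<in> sphere 0 1\<close>] assms(3,4)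
    by simp
  moreover have "\<forall>l. l + DIM('a) \<le> k \<longrightarrow> bdd_above ((\<lambda>Z. norm (sel X x - sel Z x)) ` corrupted l X)"
    using corruption_bounded_below_depth[OF assms(1,2) sel \<open>x \<in> U\<close> \<open>\<epsilon> > 0\<close> slab depth[folded k_def]]
    by blast
  ultimately have "breakdown_point sel X x \<in> {(real k - (real DIM('a) - 1)) / card X .. real k / card X}"
    by (rule breakdown_point_between[OF \<open>1 \<le> k\<close> \<open>k \<le> card X\<close>])
  then show ?thesis
    unfolding tukey k_def[symmetric] assms(3,4) by (simp add: diff_divide_distrib)
qed

end
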